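(* Let $\eta$ be a probability measure on $\Theta$ equivalent to $\mu$, $\alpha\in(0,1]$, and let $(R^*_\theta,p^*_\theta)_{\theta\in\Theta}$ be an incentive efficient menu optimal for problem (W). Suppose the premia satisfy, for every $\theta$, $$p^*_\theta=\int_0^{\bar L}\big[1-g_{\underline\theta}(F_{\underline\theta}(l))\big]dl-\int_{\underline\theta}^{\theta}\int_0^{\bar L}\Big[\frac{\partial g_s}{\partial s}(F_s(l))+g_s'(F_s(l))\frac{\partial F_s(l)}{\partial s}\Big]\frac{\partial R^*_s(l)}{\partial l}dl\,ds-\int_0^{\bar L}\big[1-g_\theta(F_\theta(l))\big]\frac{\partial R^*_\theta(l)}{\partial l}dl.$$ Then: (1) if $\frac{\partial R^*_\theta(l)}{\partial l}\equiv0$, then $\int_\Theta\int_0^{\bar L}g^{In}(F_\theta(l))\,dl\,d\mu\ge\int_0^{\bar L}g_{\underline\theta}(F_{\underline\theta}(l))\,dl$; (2) if $\frac{\partial R^*_\theta(l)}{\partial l}\equiv1$, then $V_\theta(R^*_\theta,p^*_\theta)=0$ for all $\theta\in\Theta$; (3) if $\frac{\partial R^*_\theta(l)}{\partial l}$ takes values in $(0,1)$, then $$\int_\Theta\int_0^{\bar L}g^{In}(F_\theta(l))\,dl\,d\mu\ge\int_0^{\bar L}g_{\underline\theta}(F_{\underline\theta}(l))dl+\int_\Theta U_\theta(R^*_\theta,p^*_\theta)d\mu-U_{\underline\theta}(R^*_{\underline\theta},p^*_{\underline\theta})+\int_\Theta\int_0^{\bar L}\big[g^{In}(F_\theta(l))-g_\theta(F_\theta(l))\big]\frac{\partial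 R^*_\theta(l)}{\partial l}dl\,d\mu.$$ Moreover, if $p^*_\theta=0$ and $R^*_\theta=0$ for each $\theta\in\Theta$, then $g^{In}(F_\theta(l))=1$ for almost every $\theta\in\Theta$ and almost every $l\in[0,\bar L]$.
   Context: Setting (Yaari dual-utility insurance model). $(S,\Sigma,\mathbb P)$ is a probability space. Types: $\Theta=[\underline\theta,\bar\theta]$ with Borel $\sigma$-algebra and a probability measure $\mu$ with a Lebesgue density $q$. Fix $\bar L<\infty$. For each $\theta$ the type-$\theta$ agent faces a loss $L_\theta$ (bounded, $\Sigma$-measurable, values in $[0,\bar L]$) with continuous distribution function $F_\theta(l)=\mathbb P(L_\theta\le l)$. Retention functions: $\mathcal R=\{R:[0,\bar L]\to[0,\bar L]: R(0)=0,\ 0\le\partial R(l)/\partial l\le1\}$. A menu is a family $(R_\theta,p_\theta)_{\theta\in\Theta}$ with $R_\theta\in\mathcal R$, $p_\theta\in\mathbb R$. A distortion function is a nondecreasing $g:[0,1]\to[0,1]$ with $g(0)=0,g(1)=1$; type $\theta$ has distortion $g_\theta$ (with $g'_\theta$ the derivative in $t$), the insurer $g^{In}$. Utilities: $U_\theta(R,p)=-p-\int_0^{\bar L}[1-g_\theta(F_\theta(l))]\frac{\partial R(l)}{\partial l}dl$, $V_\theta(R,p)=p-\int_0^{\bar L}[1-g^{In}(F_\theta(l))](1-\frac{\partial R(l)}{\partial l})dl$, no-insurance utility $U_\theta(L_\theta,0)=-\int_0^{\bar L}[1-g_\theta(F_\theta(l))]dl$. Throughout, for every menu $\theta\mapsto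 U_\theta(R_\theta,p_\theta)$, $\theta\mapsto V_\theta(R_\theta,p_\theta)$ lie in $L^1(\Theta,\mu)$. Individually rational (IR): $U_\theta(R_\theta,p_\theta)\ge U_\theta(L_\theta,0)$ for all $\theta$ and $\int_\Theta V_\theta(R_\theta,p_\theta)d\mu\ge0$. Incentive compatible (IC): $U_\theta(R_\theta,p_\theta)\ge U_\theta(R_{\theta'},p_{\theta'})$ for all $\theta,\theta'$. Incentive efficient: an IR and IC menu $(R^*,p^* )$ such that no IR and IC menu $(R,p)$ has $U_\theta(R_\theta,p_\theta)\ge U_\theta(R^*_\theta,p^*_\theta)$ $\mu$-a.e. and $\int V_\theta(R_\theta,p_\theta)d\mu\ge\int V_\theta(R^*_\theta,p^*_\theta)d\mu$ with strict inequality in the latter or strict inequality in the former on a set of positive $\mu$-measure. Problem (W): $\sup\{\alpha\int_\Theta U_\theta(R_\theta,p_\theta)d\eta+(1-\alpha)\int_\Theta V_\theta(R_\theta,p_\theta)d\mu\}$ over IR and IC menus. Standing assumptions: (A1) $g^{In}(t)\ge g_\theta(t)$ for all $t,\theta$. (A2) $\theta\mapsto F_\theta(l)$ differentiable, $\{F_\theta\}$ uniformly Lipschitz in $\theta$, $\partial F_\theta(l)/\partial\theta\le0$ for all $l$. (A3) each $g_\theta$ differentiable with $g'_\theta\le\delta$ for a common $\delta<\infty$; $\theta\mapsto g_\theta(t)$ differentiable, uniformly Lipschitz in $\theta$; $\partial g_\theta(t)/\partial\theta\le0$ for $t\in(0,1)$. The conditions "$\frac{\partial R^*_\theta(l)}{\partial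 l}\equiv0$" etc. refer to all $\theta\in\Theta$ and $l\in[0,\bar L]$. *)

theory Defs
  imports "HOL-Probability.Probability"
begin

definition dwithin :: "(real \<Rightarrow> real) \<Rightarrow> real \<Rightarrow> real \<Rightarrow> real \<Rightarrow> real" where
  "dwithin f a b x = vector_derivative f (at x within {a..b})"

definition distortion :: "(real \<Rightarrow> real) \<Rightarrow> bool" where
  "distortion g \<longleftrightarrow> mono_on {0..1} g \<and> (\<forall>t\<in>{0..1}. g t \<in> {0..1}) \<and> g 0 = 0 \<and> g 1 = 1"

definition retention :: "real \<Rightarrow> (real \<Rightarrow> real) \<Rightarrow> bool" where
  "retention Lb R \<longleftrightarrow> R 0 = 0 \<and> (\<forall>l\<in>{0..Lb}. R l \<in> {0..Lb}) \<and>
     (\<forall>l\<in>{0..Lb}. R differentiable (at l within {0..Lb}) \<and>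
        0 \<le> dwithin R 0 Lb l \<and> dwithin R 0 Lb l \<le> 1)"

definition Ut :: "real \<Rightarrow> (real \<Rightarrow> real) \<Rightarrow> (real \<Rightarrow> real) \<Rightarrow> (real \<Rightarrow> real) \<Rightarrow> real \<Rightarrow> real" where
  "Ut Lb g Fth R p = - p - (LINT l:{0..Lb}|lborel. (1 - g (Fth l)) * dwithin R 0 Lb l)"

definition Vt :: "real \<Rightarrow> (real \<Rightarrow> real) \<Rightarrow> (real \<Rightarrow> real) \<Rightarrow> (real \<Rightarrow> real) \<Rightarrow> real \<Rightarrow> real" where
  "Vt Lb gIn Fth R p = p - (LINT l:{0..Lb}|lborel. (1 - gIn (Fth l)) * (1 - dwithin R 0 Lb l))"

text \<open>No-insurance utility U_theta(L_theta,0).\<close>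
definition U0 :: "real \<Rightarrow> (real \<Rightarrow> real) \<Rightarrow> (real \<Rightarrow> real) \<Rightarrow> real" where
  "U0 Lb g Fth = - (LINT l:{0..Lb}|lborel. 1 - g (Fth l))"

definition menu :: "real measure \<Rightarrow> real \<Rightarrow> (real \<Rightarrow> real \<Rightarrow> real) \<Rightarrow> (real \<Rightarrow> real)
    \<Rightarrow> (real \<Rightarrow> real \<Rightarrow> real) \<Rightarrow> (real \<Rightarrow> real \<Rightarrow> real) \<Rightarrow> (real \<Rightarrow> real) \<Rightarrow> bool" where
  "menu mu Lb g gIn F R p \<longleftrightarrow> (\<forall>\<theta>\<in>space mu. retention Lb (R \<theta>)) \<and>
     integrable mu (\<lambda>\<theta>. Ut Lb (g \<theta>) (F \<theta>) (R \<theta>) (p \<theta>)) \<and>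
     integrable mu (\<lambda>\<theta>. Vt Lb gIn (F \<theta>) (R \<theta>) (p \<theta>))"

definition IR :: "real measure \<Rightarrow> real \<Rightarrow> (real \<Rightarrow> real \<Rightarrow> real) \<Rightarrow> (real \<Rightarrow> real)
    \<Rightarrow> (real \<Rightarrow> real \<Rightarrow> real) \<Rightarrow> (real \<Rightarrow> real \<Rightarrow> real) \<Rightarrow> (real \<Rightarrow> real) \<Rightarrow> bool" where
  "IR mu Lb g gIn F R p \<longleftrightarrow>
     (\<forall>\<theta>\<in>space mu. Ut Lb (g \<theta>) (F \<theta>) (R \<theta>) (p \<theta>) \<ge> U0 Lb (g \<theta>) (F \<theta>)) \<and>
     (\<integral>\<theta>. Vt Lb gIn (F \<theta>) (R \<theta>) (p \<theta>) \<partial>mu) \<ge> 0"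

definition IC :: "real measure \<Rightarrow> real \<Rightarrow> (real \<Rightarrow> real \<Rightarrow> real)
    \<Rightarrow> (real \<Rightarrow> real \<Rightarrow> real) \<Rightarrow> (real \<Rightarrow> real \<Rightarrow> real) \<Rightarrow> (real \<Rightarrow> real) \<Rightarrow> bool" where
  "IC mu Lb g F R p \<longleftrightarrow>
     (\<forall>\<theta>\<in>space mu. \<forall>\<theta>'\<in>space mu.
        Ut Lb (g \<theta>) (F \<theta>) (R \<theta>) (p \<theta>) \<ge> Ut Lb (g \<theta>) (F \<theta>) (R \<theta>') (p \<theta>'))"

definition feasible :: "real measure \<Rightarrow> real \<Rightarrow> (real \<Rightarrow> real \<Rightarrow> real) \<Rightarrow> (real \<Rightarrow> real)
    \<Rightarrow> (real \<Rightarrow> real \<Rightarrow> real) \<Rightarrow> (real \<Rightarrow> real \<Rightarrow> real) \<Rightarrow> (real \<Rightarrow> real) \<Rightarrow> bool" where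
  "feasible mu Lb g gIn F R p \<longleftrightarrow>
     menu mu Lb g gIn F R p \<and> IR mu Lb g gIn F R p \<and> IC mu Lb g F R p"

definition incentive_efficient :: "real measure \<Rightarrow> real \<Rightarrow> (real \<Rightarrow> real \<Rightarrow> real) \<Rightarrow> (real \<Rightarrow> real)
    \<Rightarrow> (real \<Rightarrow> real \<Rightarrow> real) \<Rightarrow> (real \<Rightarrow> real \<Rightarrow> real) \<Rightarrow> (real \<Rightarrow> real) \<Rightarrow> bool" where
  "incentive_efficient mu Lb g gIn F Rs ps \<longleftrightarrow>
     feasible mu Lb g gIn F Rs ps \<and>
     \<not> (\<exists>R p. feasible mu Lb g gIn F R p \<and>
          (AE \<theta> in mu. Ut Lb (g \<theta>) (F \<theta>) (R \<theta>) (p \<theta>) \<ge> Ut Lb (g \<theta>) (F \<theta>) (Rs \<theta>) (ps \<theta>)) \<and>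
          (\<integral>\<theta>. Vt Lb gIn (F \<theta>) (R \<theta>) (p \<theta>) \<partial>mu) \<ge> (\<integral>\<theta>. Vt Lb gIn (F \<theta>) (Rs \<theta>) (ps \<theta>) \<partial>mu) \<and>
          ((\<integral>\<theta>. Vt Lb gIn (F \<theta>) (R \<theta>) (p \<theta>) \<partial>mu) > (\<integral>\<theta>. Vt Lb gIn (F \<theta>) (Rs \<theta>) (ps \<theta>) \<partial>mu) \<or>
           emeasure mu {\<theta>\<in>space mu. Ut Lb (g \<theta>) (F \<theta>) (R \<theta>) (p \<theta>) > Ut Lb (g \<theta>) (F \<theta>) (Rs \<theta>) (ps \<theta>)} > 0))"

definition Wobj :: "real \<Rightarrow> real measure \<Rightarrow> real measure \<Rightarrow> real \<Rightarrow> (real \<Rightarrow> real \<Rightarrow> real) \<Rightarrow> (real \<Rightarrow> real)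
    \<Rightarrow> (real \<Rightarrow> real \<Rightarrow> real) \<Rightarrow> (real \<Rightarrow> real \<Rightarrow> real) \<Rightarrow> (real \<Rightarrow> real) \<Rightarrow> real" where
  "Wobj \<alpha> eta mu Lb g gIn F R p =
     \<alpha> * (\<integral>\<theta>. Ut Lb (g \<theta>) (F \<theta>) (R \<theta>) (p \<theta>) \<partial>eta) +
     (1 - \<alpha>) * (\<integral>\<theta>. Vt Lb gIn (F \<theta>) (R \<theta>) (p \<theta>) \<partial>mu)"

definition optimal_W :: "real \<Rightarrow> real measure \<Rightarrow> real measure \<Rightarrow> real \<Rightarrow> (real \<Rightarrow> real \<Rightarrow> real) \<Rightarrow> (real \<Rightarrow> real)
    \<Rightarrow> (real \<Rightarrow> real \<Rightarrow> real) \<Rightarrow> (real \<Rightarrow> real \<Rightarrow> real) \<Rightarrow> (real \<Rightarrow> real) \<Rightarrow> bool" where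
  "optimal_W \<alpha> eta mu Lb g gIn F Rs ps \<longleftrightarrow>
     feasible mu Lb g gIn F Rs ps \<and>
     (\<forall>R p. feasible mu Lb g gIn F R p \<longrightarrow>
        Wobj \<alpha> eta mu Lb g gIn F R p \<le> Wobj \<alpha> eta mu Lb g gIn F Rs ps)"

end

theory Submission
  imports Defs
begin

text \<open>For each type, the insured's and the insurer's utilities add up to
  \<open>\<integral> gIn (F\<^sub>\<theta>) - Lb - \<integral> (gIn - g\<^sub>\<theta>)(F\<^sub>\<theta>) R'\<^sub>\<theta>\<close>, whatever the premium.
  Integrating over the types and using the insurer's participation constraint \<open>\<integral> V \<ge> 0\<close>
  bounds \<open>\<integral>\<integral> gIn (F\<^sub>\<theta>)\<close> from below by \<open>Lb + \<integral> U + \<integral>\<integral> (gIn - g\<^sub>\<theta>)(F\<^sub>\<theta>) R'\<^sub>\<theta>\<close>.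
  The prescribed premium leaves the lowest type exactly its no-insurance utility
  \<open>\<integral> g\<^sub>\<theta>\<^sub>l (F\<^sub>\<theta>\<^sub>l) - Lb\<close>, which gives (3) for every retention, not only when
  \<open>0 < R' < 1\<close>; under full coverage (\<open>R' = 0\<close>) the premium and
  hence the utility are the same for all types, and (3) collapses to (1).
  Without coverage (\<open>R' = 1\<close>), incentive compatibility forces a flat premium, which the two
  participation constraints pin to zero: this is (2). Free full coverage leaves the insurer
  with \<open>V\<^sub>\<theta> = - \<integral> (1 - gIn (F\<^sub>\<theta>)) \<le> 0\<close>, so \<open>\<integral> V \<ge> 0\<close> forces \<open>gIn (F\<^sub>\<theta>) = 1\<close> almost
  everywhere: this is (4). The monotonicity of \<open>F\<close> in the type is used only to make
  \<open>\<theta> \<mapsto> \<integral> gIn (F\<^sub>\<theta>)\<close> measurable.\<close>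

lemma LIMSEQ_difference_quotient_dwithin:
  fixes f h :: "real \<Rightarrow> real"
  assumes f: "f differentiable (at x within {a..b})" and x: "a \<le> x" "x < b"
    and h: "\<And>y. y \<in> {a..b} \<Longrightarrow> h y = f y"
  shows "(\<lambda>n. real (Suc n) * (h (x + 1 / real (Suc n)) - h x)) \<longlonglongrightarrow> dwithin f a b x"
proof -
  have "(f has_field_derivative dwithin f a b x) (at x within {a..b})"
    using f vector_derivative_works has_real_derivative_iff_has_vector_derivative
    unfolding dwithin_def by blast
  then have quotient: "((\<lambda>y. (f y - f x) / (y - x)) \<longlongrightarrow> dwithin f a b x) (at x within {a..b})"
    by (simp add: has_field_derivative_iff)
  have to_x: "(\<lambda>n. x + 1 / real (Suc n)) \<longlonglongrightarrow> x"
    using tendsto_add[OF tendsto_const LIMSEQ_inverse_real_of_nat] by (simp add: inverse_eq_divide)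
  have inside: "eventually (\<lambda>n. x + 1 / real (Suc n) \<in> {a..b}) sequentially"
    using order_tendstoD(2)[OF to_x \<open>x < b\<close>] x
    by (auto elim: eventually_mono intro!: add_increasing2)
  then have "filterlim (\<lambda>n. x + 1 / real (Suc n)) (at x within {a..b}) sequentially"
    unfolding filterlim_at using to_x by (auto elim!: eventually_mono)
  from filterlim_compose[OF quotient this]
  have "(\<lambda>n. real (Suc n) * (f (x + 1 / real (Suc n)) - f x)) \<longlonglongrightarrow> dwithin f a b x"
    by (simp add: mult.commute)
  moreover have "eventually (\<lambda>n. real (Suc n) * (f (x + 1 / real (Suc n)) - f x) =
      real (Suc n) * (h (x + 1 / real (Suc n)) - h x)) sequentially"
    using inside x by (auto simp: h elim!: eventually_mono)
  ultimately show ?thesis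
    by (rule Lim_transform_eventually)
qed

text \<open>Away from the right endpoint, the derivative is the limit of right difference quotients
  of the clamped continuous extension of \<open>f\<close>; the endpoint itself is a single point.\<close>

lemma borel_measurable_indicator_dwithin:
  fixes f :: "real \<Rightarrow> real"
  assumes f: "\<And>x. x \<in> {a..b} \<Longrightarrow> f differentiable (at x within {a..b})"
  shows "(\<lambda>x. indicator {a..b} x * dwithin f a b x) \<in> borel_measurable borel"
proof -
  define fc where "fc x = f (max a (min b x))" for x
  have "continuous_on {a..b} f"
    using f differentiable_imp_continuous_within continuous_on_eq_continuous_within by blast
  then have "continuous_on UNIV fc"
  proof (cases "a \<le> b")
    case True
    have "continuous_on UNIV (\<lambda>x. max a (min b x))"
      by (intro continuous_intros)
    with True show ?thesis
      unfolding fc_def by (intro continuous_on_compose2[OF \<open>continuous_on {a..b} f\<close>]) auto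
  next
    case False
    then have "fc = (\<lambda>x. f a)" by (auto simp: fc_def fun_eq_iff)
    then show ?thesis by simp
  qed
  then have fc_meas: "fc \<in> borel_measurable borel"
    by (rule borel_measurable_continuous_onI)
  define d where "d x = indicator {a..<b} x * dwithin f a b x" for x
  have "(\<lambda>n. indicator {a..<b} x * (real (Suc n) * (fc (x + 1 / real (Suc n)) - fc x)))
      \<longlonglongrightarrow> d x" for x
    using LIMSEQ_difference_quotient_dwithin[of f x a b fc] f
    by (cases "x \<in> {a..<b}") (auto simp: d_def fc_def)
  then have "d \<in> borel_measurable borel"
    by (rule borel_measurable_LIMSEQ_real) (use fc_meas in measurable)
  moreover have "(\<lambda>x. indicator {a..b} x * dwithin f a b x) =
      (\<lambda>x. d x + indicator {b} x * indicator {a..b} x * dwithin f a b b)"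
    by (auto simp: fun_eq_iff d_def indicator_def)
  ultimately show ?thesis
    by simp
qed

lemma set_integrable_Icc_bounded:
  fixes f :: "real \<Rightarrow> real"
  assumes "(\<lambda>x. indicator {a..b} x * f x) \<in> borel_measurable borel"
    and "\<And>x. x \<in> {a..b} \<Longrightarrow> \<bar>f x\<bar> \<le> B"
  shows "set_integrable lborel {a..b} f"
  unfolding set_integrable_def
  by (rule integrableI_bounded_set[where A="{a..b}" and B=B])
    (use assms in \<open>auto simp: emeasure_lborel_Icc_eq\<close>)

lemma set_integrable_Icc_const:
  fixes a b c :: real
  shows "set_integrable lborel {a..b} (\<lambda>_. c)"
  by (rule set_integrable_Icc_bounded[where B="\<bar>c\<bar>"]) auto

lemma set_integral_Icc_degenerate:
  fixes f :: "real \<Rightarrow> real"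
  assumes "b \<le> a"
  shows "(LINT x:{a..b}|lborel. f x) = 0"
  unfolding set_lebesgue_integral_def
proof (rule integral_eq_zero_AE)
  show "AE x in lborel. indicator {a..b} x *\<^sub>R f x = 0"
    using AE_lborel_singleton[of a] assms by (auto elim!: eventually_mono)
qed

lemma set_integral_mult_eq_const:
  fixes u d :: "real \<Rightarrow> real"
  assumes "\<And>x. x \<in> A \<Longrightarrow> d x = c" and "A \<in> sets M"
  shows "(LINT x:A|M. u x * d x) = c * (LINT x:A|M. u x)"
proof -
  have "(LINT x:A|M. u x * d x) = (LINT x:A|M. c * u x)"
    by (rule set_lebesgue_integral_cong) (use assms in auto)
  then show ?thesis
    by simp
qed

lemma set_integral_mult_dwithin_const:
  fixes f u :: "real \<Rightarrow> real"
  assumes const: "\<And>x. x \<in> {a..b} \<Longrightarrow> f x = c"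
  shows "(LINT x:{a..b}|lborel. u x * dwithin f a b x) = 0"
proof (cases "a < b")
  case True
  have "dwithin f a b x = 0" if "x \<in> {a..b}" for x
  proof -
    have "(f has_vector_derivative 0) (at x within {a..b})"
      by (rule has_vector_derivative_transform[OF that _ has_vector_derivative_const])
        (use const that in auto)
    then show ?thesis
      unfolding dwithin_def using vector_derivative_within_closed_interval[OF True that] by blast
  qed
  then show ?thesis
    by (subst set_integral_mult_eq_const[where c=0]) auto
qed (simp add: set_integral_Icc_degenerate)

lemma dwithin_nonpos_imp_decreasing:
  fixes f :: "real \<Rightarrow> real"
  assumes f: "\<And>x. x \<in> {a..b} \<Longrightarrow> f differentiable (at x within {a..b})"
    and nonpos: "\<And>x. x \<in> {a..b} \<Longrightarrow> dwithin f a b x \<le> 0"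
    and "a \<le> x" "x \<le> y" "y \<le> b"
  shows "f y \<le> f x"
proof (rule DERIV_nonpos_imp_decreasing_open[OF \<open>x \<le> y\<close>])
  have "continuous_on {a..b} f"
    using f differentiable_imp_continuous_within continuous_on_eq_continuous_within by blast
  then show "continuous_on {x..y} f"
    by (rule continuous_on_subset) (use assms in auto)
  fix z assume "x < z" "z < y"
  then have z: "z \<in> {a..b}" "a < z" "z < b"
    using assms by auto
  have "(f has_vector_derivative dwithin f a b z) (at z within {a..b})"
    using f[OF z(1)] vector_derivative_works unfolding dwithin_def by blast
  then have "DERIV f z :> dwithin f a b z"
    by (simp add: at_within_Icc_at[OF z(2,3)] has_real_derivative_iff_has_vector_derivative)
  with nonpos[OF z(1)] show "\<exists>y. DERIV f z :> y \<and> y \<le> 0"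
    by blast
qed

lemma AE_lebesgue_on_eq_0_if_set_integral_eq_0:
  fixes f :: "real \<Rightarrow> real"
  assumes f: "set_integrable lborel A f" and A: "A \<in> sets borel"
    and nonneg: "\<And>x. x \<in> A \<Longrightarrow> 0 \<le> f x" and zero: "(LINT x:A|lborel. f x) = 0"
  shows "AE x in lebesgue_on A. f x = 0"
proof -
  have "AE x in lborel. indicator A x *\<^sub>R f x = 0"
    using f zero nonneg unfolding set_integrable_def set_lebesgue_integral_def
    by (subst integral_nonneg_eq_0_iff_AE[symmetric]) (auto simp: indicator_def)
  then have "AE x in lebesgue. x \<in> A \<longrightarrow> f x = 0"
    by (intro AE_completion) (auto elim!: eventually_mono simp: indicator_def split: if_splits)
  then show ?thesis
    using A by (subst AE_restrict_space_iff) auto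
qed

lemma distribution_function_mono_range:
  fixes L :: "'s \<Rightarrow> real"
  assumes "prob_space P" and "L \<in> borel_measurable P"
  shows "mono (\<lambda>l. measure P {s \<in> space P. L s \<le> l})"
    and "measure P {s \<in> space P. L s \<le> l} \<in> {0..1}"
proof -
  interpret prob_space P by fact
  show "measure P {s \<in> space P. L s \<le> l} \<in> {0..1}"
    by simp
  have "{s \<in> space P. L s \<le> l} \<in> sets P" for l
    using assms(2) by measurable
  then show "mono (\<lambda>l. measure P {s \<in> space P. L s \<le> l})"
    by (intro monoI finite_measure_mono) auto
qed

lemma distortion_comp_mono:
  assumes h: "distortion h" and f: "mono f" "\<And>x. f x \<in> {0..1}"
  shows "mono (\<lambda>x. h (f x))" and "h (f x) \<in> {0..1}"
proof -
  have "mono_on {0..1} h" "\<And>t. t \<in> {0..1} \<Longrightarrow> h t \<in> {0..1}"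
    using h by (auto simp: distortion_def)
  with f show "mono (\<lambda>x. h (f x))" "h (f x) \<in> {0..1}"
    by (auto intro!: monoI mono_onD[of "{0..1}" h] dest: monoD[of f])
qed

lemma set_integrable_distortion_comp:
  fixes F :: "real \<Rightarrow> real"
  assumes "distortion h" "mono F" "\<And>l. F l \<in> {0..1}"
  shows "set_integrable lborel {a..b} (\<lambda>l. h (F l))"
proof (rule set_integrable_Icc_bounded[where B=1])
  have "(\<lambda>l. h (F l)) \<in> borel_measurable borel"
    using distortion_comp_mono(1)[OF assms] by (rule borel_measurable_mono)
  then show "(\<lambda>l. indicator {a..b} l * h (F l)) \<in> borel_measurable borel"
    by simp
  show "\<bar>h (F l)\<bar> \<le> 1" for l
    using distortion_comp_mono(2)[OF assms] by (simp add: abs_le_iff)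
qed

lemma U0_eq:
  fixes F :: "real \<Rightarrow> real"
  assumes "distortion h" "mono F" "\<And>l. F l \<in> {0..1}"
  shows "U0 Lb h F = (LINT l:{0..Lb}|lborel. h (F l)) - (LINT l:{0..Lb}|lborel. 1)"
  using set_integrable_Icc_const[of 0 Lb 1] set_integrable_distortion_comp[OF assms, of 0 Lb]
  by (simp add: U0_def set_integral_diff)

lemma set_integrable_affine_dwithin:
  fixes f u v w :: "real \<Rightarrow> real"
  assumes f: "\<And>x. x \<in> {a..b} \<Longrightarrow> f differentiable (at x within {a..b})"
      "\<And>x. x \<in> {a..b} \<Longrightarrow> \<bar>dwithin f a b x\<bar> \<le> 1"
    and w: "\<And>x. w x = u x + v x * dwithin f a b x"
    and u: "u \<in> borel_measurable borel" "\<And>x. \<bar>u x\<bar> \<le> B"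
    and v: "v \<in> borel_measurable borel" "\<And>x. \<bar>v x\<bar> \<le> B"
  shows "set_integrable lborel {a..b} w"
proof (rule set_integrable_Icc_bounded[where B="2 * B"])
  have "(\<lambda>x. indicator {a..b} x * w x) =
      (\<lambda>x. u x * indicator {a..b} x + v x * (indicator {a..b} x * dwithin f a b x))"
    by (simp add: fun_eq_iff w algebra_simps)
  then show "(\<lambda>x. indicator {a..b} x * w x) \<in> borel_measurable borel"
    using u(1) v(1) borel_measurable_indicator_dwithin[OF f(1)] by simp
  fix x assume "x \<in> {a..b}"
  then have "\<bar>v x\<bar> * \<bar>dwithin f a b x\<bar> \<le> B * 1"
    using v(2)[of x] f(2)[of x] by (intro mult_mono) auto
  then show "\<bar>w x\<bar> \<le> 2 * B"
    using u(2)[of x] abs_triangle_ineq[of "u x" "v x * dwithin f a b x"]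
    by (simp add: w abs_mult)
qed

lemma Ut_plus_Vt:
  assumes R: "retention Lb R" and g: "distortion g" and gIn: "distortion gIn"
    and F: "mono F" "\<And>l. F l \<in> {0..1}"
  shows "Ut Lb g F R p + Vt Lb gIn F R p =
    (LINT l:{0..Lb}|lborel. gIn (F l)) - (LINT l:{0..Lb}|lborel. 1)
    - (LINT l:{0..Lb}|lborel. (gIn (F l) - g (F l)) * dwithin R 0 Lb l)"
proof -
  let ?D = "dwithin R 0 Lb"
  have integrable: "set_integrable lborel {0..Lb} w"
    if "\<And>l. w l = u l + v l * ?D l" "u \<in> borel_measurable borel" "\<And>l. \<bar>u l\<bar> \<le> 1"
      "v \<in> borel_measurable borel" "\<And>l. \<bar>v l\<bar> \<le> 1" for w u v
    using R that by (intro set_integrable_affine_dwithin[of 0 Lb R w u v 1])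
      (auto simp: retention_def)
  have distorted: "(\<lambda>l. h (F l)) \<in> borel_measurable borel" "0 \<le> h (F l)" "h (F l) \<le> 1"
    if "distortion h" for h l
    using distortion_comp_mono[OF that F] borel_measurable_mono by auto
  note gF = distorted[OF g] and gInF = distorted[OF gIn]
  have i1: "set_integrable lborel {0..Lb} (\<lambda>l. (1 - g (F l)) * ?D l)"
    by (rule integrable[where u="\<lambda>_. 0" and v="\<lambda>l. 1 - g (F l)"]) (use gF in auto)
  have i2: "set_integrable lborel {0..Lb} (\<lambda>l. (1 - gIn (F l)) * (1 - ?D l))"
    by (rule integrable[where u="\<lambda>l. 1 - gIn (F l)" and v="\<lambda>l. gIn (F l) - 1"])
      (use gInF in \<open>auto simp: algebra_simps\<close>)
  have i3: "set_integrable lborel {0..Lb} (\<lambda>l. (gIn (F l) - g (F l)) * ?D l)"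
  proof (rule integrable[where u="\<lambda>_. 0" and v="\<lambda>l. gIn (F l) - g (F l)"])
    show "\<bar>gIn (F l) - g (F l)\<bar> \<le> 1" for l
      using gF(2,3)[of l] gInF(2,3)[of l] by (simp add: abs_le_iff)
  qed (use gF gInF in auto)
  have i4: "set_integrable lborel {0..Lb} (\<lambda>l. gIn (F l))"
    using gIn F by (rule set_integrable_distortion_comp)
  have "Ut Lb g F R p + Vt Lb gIn F R p =
      - (LINT l:{0..Lb}|lborel. (1 - g (F l)) * ?D l + (1 - gIn (F l)) * (1 - ?D l))"
    unfolding Ut_def Vt_def using i1 i2 by (simp add: set_integral_add)
  also have "\<dots> = - (LINT l:{0..Lb}|lborel. (1 - gIn (F l)) + (gIn (F l) - g (F l)) * ?D l)"
    by (simp add: algebra_simps)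
  also have "\<dots> = (LINT l:{0..Lb}|lborel. gIn (F l)) - (LINT l:{0..Lb}|lborel. 1)
      - (LINT l:{0..Lb}|lborel. (gIn (F l) - g (F l)) * ?D l)"
    using i3 i4 set_integrable_Icc_const[of 0 Lb 1]
    by (simp add: set_integral_add set_integral_diff)
  finally show ?thesis .
qed

text \<open>The premium schedule of the hypothesis: the lowest type gets exactly its no-insurance
  utility, and utility evolves across types according to the envelope formula of incentive
  compatibility.\<close>

definition envelope_premium :: "real \<Rightarrow> real \<Rightarrow> real \<Rightarrow> (real \<Rightarrow> real \<Rightarrow> real)
    \<Rightarrow> (real \<Rightarrow> real \<Rightarrow> real) \<Rightarrow> (real \<Rightarrow> real \<Rightarrow> real) \<Rightarrow> real \<Rightarrow> real" where
  "envelope_premium Lb \<theta>l \<theta>u g F R \<theta> =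
     (LINT l:{0..Lb}|lborel. 1 - g \<theta>l (F \<theta>l l))
     - (LINT s:{\<theta>l..\<theta>}|lborel. (LINT l:{0..Lb}|lborel.
          (dwithin (\<lambda>r. g r (F s l)) \<theta>l \<theta>u s
            + dwithin (g s) 0 1 (F s l) * dwithin (\<lambda>r. F r l) \<theta>l \<theta>u s)
          * dwithin (R s) 0 Lb l))
     - (LINT l:{0..Lb}|lborel. (1 - g \<theta> (F \<theta> l)) * dwithin (R \<theta>) 0 Lb l)"

lemma Ut_envelope_premium_lowest_type:
  "Ut Lb (g \<theta>l) (F \<theta>l) (R \<theta>l) (envelope_premium Lb \<theta>l \<theta>u g F R \<theta>l)
    = U0 Lb (g \<theta>l) (F \<theta>l)"
  using set_integral_Icc_degenerate[of \<theta>l \<theta>l] by (simp add: Ut_def U0_def envelope_premium_def)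

lemma Ut_envelope_premium_full_coverage:
  assumes full: "\<forall>\<theta>\<in>{\<theta>l..\<theta>u}. \<forall>l\<in>{0..Lb}. dwithin (R \<theta>) 0 Lb l = 0" and "\<theta> \<in> {\<theta>l..\<theta>u}"
  shows "Ut Lb (g \<theta>) (F \<theta>) (R \<theta>) (envelope_premium Lb \<theta>l \<theta>u g F R \<theta>) = U0 Lb (g \<theta>l) (F \<theta>l)"
proof -
  have no_retention: "(LINT l:{0..Lb}|lborel. u l * dwithin (R s) 0 Lb l) = 0"
    if "s \<in> {\<theta>l..\<theta>u}" for s u
    by (subst set_integral_mult_eq_const[where c=0]) (use full that in auto)
  have "(LINT s:{\<theta>l..\<theta>}|lborel. (LINT l:{0..Lb}|lborel.
      (dwithin (\<lambda>r. g r (F s l)) \<theta>l \<theta>u s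
        + dwithin (g s) 0 1 (F s l) * dwithin (\<lambda>r. F r l) \<theta>l \<theta>u s)
      * dwithin (R s) 0 Lb l)) = (LINT s:{\<theta>l..\<theta>}|lborel. 0)"
    by (rule set_lebesgue_integral_cong) (use \<open>\<theta> \<in> {\<theta>l..\<theta>u}\<close> no_retention in auto)
  then show ?thesis
    using no_retention[OF \<open>\<theta> \<in> {\<theta>l..\<theta>u}\<close>] by (simp add: Ut_def U0_def envelope_premium_def)
qed

locale insurance_market = prob_space mu for mu :: "real measure" +
  fixes Lb \<theta>l \<theta>u :: real and g :: "real \<Rightarrow> real \<Rightarrow> real" and gIn :: "real \<Rightarrow> real"
    and F :: "real \<Rightarrow> real \<Rightarrow> real"
  assumes space_mu: "space mu = {\<theta>l..\<theta>u}"
    and sets_mu: "sets mu = sets (restrict_space borel {\<theta>l..\<theta>u})"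
    and distortion_g: "\<And>\<theta>. \<theta> \<in> {\<theta>l..\<theta>u} \<Longrightarrow> distortion (g \<theta>)"
    and distortion_gIn: "distortion gIn"
    and mono_F: "\<And>\<theta>. \<theta> \<in> {\<theta>l..\<theta>u} \<Longrightarrow> mono (F \<theta>)"
    and F_range: "\<And>\<theta> l. \<theta> \<in> {\<theta>l..\<theta>u} \<Longrightarrow> F \<theta> l \<in> {0..1}"
    and F_decreasing_type:
      "\<And>\<theta> \<theta>' l. \<theta> \<in> {\<theta>l..\<theta>u} \<Longrightarrow> \<theta>' \<in> {\<theta>l..\<theta>u} \<Longrightarrow> \<theta> \<le> \<theta>' \<Longrightarrow> F \<theta>' l \<le> F \<theta> l"
begin

lemma lowest_type_mem: "\<theta>l \<in> {\<theta>l..\<theta>u}"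
  using not_empty by (auto simp: space_mu)

lemma integrable_expected_gIn: "integrable mu (\<lambda>\<theta>. LINT l:{0..Lb}|lborel. gIn (F \<theta> l))"
proof -
  define G where "G \<theta> = (LINT l:{0..Lb}|lborel. gIn (F \<theta> l))" for \<theta>
  have gInF: "set_integrable lborel {0..Lb} (\<lambda>l. gIn (F \<theta> l))" "gIn (F \<theta> l) \<in> {0..1}"
    if "\<theta> \<in> {\<theta>l..\<theta>u}" for \<theta> l
    using set_integrable_distortion_comp distortion_comp_mono(2)
      distortion_gIn mono_F[OF that] F_range[OF that] by blast+
  have "G \<theta>' \<le> G \<theta>" if "\<theta> \<in> {\<theta>l..\<theta>u}" "\<theta>' \<in> {\<theta>l..\<theta>u}" "\<theta> \<le> \<theta>'" for \<theta> \<theta>'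
    unfolding G_def
  proof (intro set_integral_mono gInF that)
    show "gIn (F \<theta>' l) \<le> gIn (F \<theta> l)" for l
      using distortion_gIn F_range[OF that(1)] F_range[OF that(2)] F_decreasing_type[OF that]
      unfolding distortion_def by (auto intro: mono_onD)
  qed
  then have "(\<lambda>\<theta>. - G \<theta>) \<in> borel_measurable (restrict_space borel {\<theta>l..\<theta>u})"
    by (intro borel_measurable_mono_on_fnc mono_onI) auto
  moreover have "borel_measurable mu = borel_measurable (restrict_space borel {\<theta>l..\<theta>u})"
    by (rule measurable_cong_sets) (simp_all add: sets_mu)
  ultimately have "G \<in> borel_measurable mu"
    by (metis borel_measurable_uminus_eq)
  moreover have "\<bar>G \<theta>\<bar> \<le> (LINT l:{0..Lb}|lborel. 1)" if "\<theta> \<in> {\<theta>l..\<theta>u}" for \<theta>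
  proof -
    have "(LINT l:{0..Lb}|lborel. 0) \<le> G \<theta>"
      unfolding G_def by (rule set_integral_mono[OF set_integrable_Icc_const gInF(1)[OF that]])
        (use gInF(2)[OF that] in auto)
    moreover have "G \<theta> \<le> (LINT l:{0..Lb}|lborel. 1)"
      unfolding G_def by (rule set_integral_mono[OF gInF(1)[OF that] set_integrable_Icc_const])
        (use gInF(2)[OF that] in auto)
    ultimately show ?thesis
      by simp
  qed
  ultimately show ?thesis
    unfolding G_def by (intro integrable_const_bound[where B="LINT l:{0..Lb}|lborel. 1"])
      (auto simp: space_mu)
qed

lemma welfare_bound:
  assumes "feasible mu Lb g gIn F R p"
  shows "(LINT l:{0..Lb}|lborel. 1) + (\<integral>\<theta>. Ut Lb (g \<theta>) (F \<theta>) (R \<theta>) (p \<theta>) \<partial>mu)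
      + (\<integral>\<theta>. (LINT l:{0..Lb}|lborel. (gIn (F \<theta> l) - g \<theta> (F \<theta> l)) * dwithin (R \<theta>) 0 Lb l) \<partial>mu)
    \<le> (\<integral>\<theta>. (LINT l:{0..Lb}|lborel. gIn (F \<theta> l)) \<partial>mu)"
proof -
  define C where "C = (LINT l:{0..Lb}|lborel. 1 :: real)"
  define G U V W where
    "G \<theta> = (LINT l:{0..Lb}|lborel. gIn (F \<theta> l))" and
    "U \<theta> = Ut Lb (g \<theta>) (F \<theta>) (R \<theta>) (p \<theta>)" and
    "V \<theta> = Vt Lb gIn (F \<theta>) (R \<theta>) (p \<theta>)" and
    "W \<theta> = (LINT l:{0..Lb}|lborel. (gIn (F \<theta> l) - g \<theta> (F \<theta> l)) * dwithin (R \<theta>) 0 Lb l)"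
    for \<theta>
  have retention: "\<And>\<theta>. \<theta> \<in> space mu \<Longrightarrow> retention Lb (R \<theta>)"
    and U: "integrable mu U" and V: "integrable mu V" and V_nonneg: "0 \<le> integral\<^sup>L mu V"
    using assms unfolding feasible_def menu_def IR_def U_def V_def by auto
  have G: "integrable mu G"
    using integrable_expected_gIn unfolding G_def .
  have identity: "G \<theta> = C + U \<theta> + V \<theta> + W \<theta>" if "\<theta> \<in> space mu" for \<theta>
    using that
      Ut_plus_Vt[OF retention[OF that] distortion_g distortion_gIn mono_F F_range, of \<theta> \<theta> "p \<theta>"]
    unfolding space_mu C_def G_def U_def V_def W_def by simp
  have "integrable mu W \<longleftrightarrow> integrable mu (\<lambda>\<theta>. G \<theta> - C - U \<theta> - V \<theta>)"
    by (rule Bochner_Integration.integrable_cong) (simp_all add: identity)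
  then have W: "integrable mu W"
    using G U V by simp
  have "integral\<^sup>L mu G = (\<integral>\<theta>. C + U \<theta> + V \<theta> + W \<theta> \<partial>mu)"
    by (rule Bochner_Integration.integral_cong) (simp_all add: identity)
  also have "\<dots> = C + integral\<^sup>L mu U + integral\<^sup>L mu V + integral\<^sup>L mu W"
    using U V W by (simp add: prob_space)
  finally show ?thesis
    using V_nonneg unfolding C_def G_def U_def W_def by linarith
qed

lemma welfare_bound_envelope_premium:
  assumes feasible: "feasible mu Lb g gIn F R p"
    and premium: "\<And>\<theta>. \<theta> \<in> {\<theta>l..\<theta>u} \<Longrightarrow> p \<theta> = envelope_premium Lb \<theta>l \<theta>u g F R \<theta>"
  shows "(LINT l:{0..Lb}|lborel. g \<theta>l (F \<theta>l l))
      + (\<integral>\<theta>. Ut Lb (g \<theta>) (F \<theta>) (R \<theta>) (p \<theta>) \<partial>mu)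
      - Ut Lb (g \<theta>l) (F \<theta>l) (R \<theta>l) (p \<theta>l)
      + (\<integral>\<theta>. (LINT l:{0..Lb}|lborel. (gIn (F \<theta> l) - g \<theta> (F \<theta> l)) * dwithin (R \<theta>) 0 Lb l) \<partial>mu)
    \<le> (\<integral>\<theta>. (LINT l:{0..Lb}|lborel. gIn (F \<theta> l)) \<partial>mu)"
proof -
  have "Ut Lb (g \<theta>l) (F \<theta>l) (R \<theta>l) (p \<theta>l) =
      (LINT l:{0..Lb}|lborel. g \<theta>l (F \<theta>l l)) - (LINT l:{0..Lb}|lborel. 1)"
    using Ut_envelope_premium_lowest_type premium[OF lowest_type_mem]
      U0_eq[OF distortion_g mono_F F_range, OF lowest_type_mem lowest_type_mem lowest_type_mem]
    by simp
  with welfare_bound[OF feasible] show ?thesis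
    by linarith
qed

lemma expected_gIn_ge_full_coverage:
  assumes feasible: "feasible mu Lb g gIn F R p"
    and premium: "\<And>\<theta>. \<theta> \<in> {\<theta>l..\<theta>u} \<Longrightarrow> p \<theta> = envelope_premium Lb \<theta>l \<theta>u g F R \<theta>"
    and full: "\<forall>\<theta>\<in>{\<theta>l..\<theta>u}. \<forall>l\<in>{0..Lb}. dwithin (R \<theta>) 0 Lb l = 0"
  shows "(LINT l:{0..Lb}|lborel. g \<theta>l (F \<theta>l l))
    \<le> (\<integral>\<theta>. (LINT l:{0..Lb}|lborel. gIn (F \<theta> l)) \<partial>mu)"
proof -
  have "Ut Lb (g \<theta>) (F \<theta>) (R \<theta>) (p \<theta>) = Ut Lb (g \<theta>l) (F \<theta>l) (R \<theta>l) (p \<theta>l)"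
    if "\<theta> \<in> space mu" for \<theta>
    using that lowest_type_mem Ut_envelope_premium_full_coverage[OF full] premium
    by (simp add: space_mu)
  then have "(\<integral>\<theta>. Ut Lb (g \<theta>) (F \<theta>) (R \<theta>) (p \<theta>) \<partial>mu) = Ut Lb (g \<theta>l) (F \<theta>l) (R \<theta>l) (p \<theta>l)"
    by (simp add: prob_space cong: Bochner_Integration.integral_cong)
  moreover have "(LINT l:{0..Lb}|lborel. (gIn (F \<theta> l) - g \<theta> (F \<theta> l)) * dwithin (R \<theta>) 0 Lb l) = 0"
    if "\<theta> \<in> space mu" for \<theta>
    by (subst set_integral_mult_eq_const[where c=0]) (use that full in \<open>auto simp: space_mu\<close>)
  then have "(\<integral>\<theta>. (LINT l:{0..Lb}|lborel. (gIn (F \<theta> l) - g \<theta> (F \<theta> l)) * dwithin (R \<theta>) 0 Lb l)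
      \<partial>mu) = 0"
    by (simp cong: Bochner_Integration.integral_cong)
  ultimately show ?thesis
    using welfare_bound_envelope_premium[OF feasible premium] by simp
qed

lemma Vt_eq_0_no_coverage:
  assumes feasible: "feasible mu Lb g gIn F R p"
    and none: "\<forall>\<theta>\<in>{\<theta>l..\<theta>u}. \<forall>l\<in>{0..Lb}. dwithin (R \<theta>) 0 Lb l = 1"
  shows "\<forall>\<theta>\<in>{\<theta>l..\<theta>u}. Vt Lb gIn (F \<theta>) (R \<theta>) (p \<theta>) = 0"
proof -
  have IR_U: "\<And>\<theta>. \<theta> \<in> {\<theta>l..\<theta>u} \<Longrightarrow> U0 Lb (g \<theta>) (F \<theta>) \<le> Ut Lb (g \<theta>) (F \<theta>) (R \<theta>) (p \<theta>)"
    and IR_V: "0 \<le> (\<integral>\<theta>. Vt Lb gIn (F \<theta>) (R \<theta>) (p \<theta>) \<partial>mu)"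
    and IC: "\<And>\<theta> \<theta>'. \<theta> \<in> {\<theta>l..\<theta>u} \<Longrightarrow> \<theta>' \<in> {\<theta>l..\<theta>u} \<Longrightarrow>
      Ut Lb (g \<theta>) (F \<theta>) (R \<theta>') (p \<theta>') \<le> Ut Lb (g \<theta>) (F \<theta>) (R \<theta>) (p \<theta>)"
    using feasible unfolding feasible_def IR_def IC_def space_mu by auto
  have Ut: "Ut Lb (g \<theta>) (F \<theta>) (R \<theta>') (p \<theta>') = U0 Lb (g \<theta>) (F \<theta>) - p \<theta>'"
    if "\<theta>' \<in> {\<theta>l..\<theta>u}" for \<theta> \<theta>'
    unfolding Ut_def U0_def by (subst set_integral_mult_eq_const[where c=1]) (use that none in auto)
  have Vt: "Vt Lb gIn (F \<theta>) (R \<theta>) (p \<theta>) = p \<theta>" if "\<theta> \<in> {\<theta>l..\<theta>u}" for \<theta>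
    unfolding Vt_def by (subst set_integral_mult_eq_const[where c=0]) (use that none in auto)
  have flat: "p \<theta> = p \<theta>l" if "\<theta> \<in> {\<theta>l..\<theta>u}" for \<theta>
    using IC[OF that lowest_type_mem] IC[OF lowest_type_mem that]
    by (simp add: Ut[OF that] Ut[OF lowest_type_mem])
  have V_flat: "Vt Lb gIn (F \<theta>) (R \<theta>) (p \<theta>) = p \<theta>l" if "\<theta> \<in> {\<theta>l..\<theta>u}" for \<theta>
    using Vt[OF that] flat[OF that] by simp
  have "p \<theta>l \<le> 0"
    using IR_U[OF lowest_type_mem] by (simp add: Ut[OF lowest_type_mem])
  moreover have "(\<integral>\<theta>. Vt Lb gIn (F \<theta>) (R \<theta>) (p \<theta>) \<partial>mu) = (\<integral>\<theta>. p \<theta>l \<partial>mu)"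
    by (rule Bochner_Integration.integral_cong) (simp_all add: V_flat space_mu)
  ultimately show ?thesis
    using IR_V V_flat by (simp add: prob_space)
qed

lemma loss_integrand:
  assumes "\<theta> \<in> {\<theta>l..\<theta>u}"
  shows "set_integrable lborel {0..Lb} (\<lambda>l. 1 - gIn (F \<theta> l))" and "0 \<le> 1 - gIn (F \<theta> l)"
  using set_integral_diff(1)[OF set_integrable_Icc_const
      set_integrable_distortion_comp[OF distortion_gIn mono_F[OF assms] F_range[OF assms]]]
    distortion_comp_mono(2)[OF distortion_gIn mono_F[OF assms] F_range[OF assms], of l]
  by auto

lemma Vt_free_full_coverage:
  assumes \<theta>: "\<theta> \<in> {\<theta>l..\<theta>u}" and R: "retention Lb R" and full: "\<forall>l\<in>{0..Lb}. R l = 0"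
  shows "Vt Lb gIn (F \<theta>) R 0 = U0 Lb gIn (F \<theta>)"
proof -
  have no_retention: "(LINT l:{0..Lb}|lborel. u l * dwithin R 0 Lb l) = 0" for u
    using full by (intro set_integral_mult_dwithin_const[where c=0]) auto
  show ?thesis
    using Ut_plus_Vt[OF R distortion_g[OF \<theta>] distortion_gIn mono_F[OF \<theta>] F_range[OF \<theta>], of 0]
      U0_eq[OF distortion_gIn mono_F[OF \<theta>] F_range[OF \<theta>], of Lb]
    by (simp add: Ut_def no_retention)
qed

lemma AE_gIn_eq_1_free_full_coverage:
  assumes feasible: "feasible mu Lb g gIn F R p"
    and free: "\<forall>\<theta>\<in>{\<theta>l..\<theta>u}. p \<theta> = 0 \<and> (\<forall>l\<in>{0..Lb}. R \<theta> l = 0)"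
  shows "AE \<theta> in mu. AE l in lebesgue_on {0..Lb}. gIn (F \<theta> l) = 1"
proof -
  define h where "h \<theta> = (LINT l:{0..Lb}|lborel. 1 - gIn (F \<theta> l))" for \<theta>
  have retention: "\<And>\<theta>. \<theta> \<in> {\<theta>l..\<theta>u} \<Longrightarrow> retention Lb (R \<theta>)"
    and V: "integrable mu (\<lambda>\<theta>. Vt Lb gIn (F \<theta>) (R \<theta>) (p \<theta>))"
    and IR_V: "0 \<le> (\<integral>\<theta>. Vt Lb gIn (F \<theta>) (R \<theta>) (p \<theta>) \<partial>mu)"
    using feasible unfolding feasible_def menu_def IR_def space_mu by auto
  have Vt: "Vt Lb gIn (F \<theta>) (R \<theta>) (p \<theta>) = - h \<theta>" if "\<theta> \<in> {\<theta>l..\<theta>u}" for \<theta>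
    using Vt_free_full_coverage[OF that retention[OF that]] free that by (simp add: U0_def h_def)
  have "integrable mu (\<lambda>\<theta>. Vt Lb gIn (F \<theta>) (R \<theta>) (p \<theta>)) \<longleftrightarrow> integrable mu (\<lambda>\<theta>. - h \<theta>)"
    by (rule Bochner_Integration.integrable_cong) (simp_all add: Vt space_mu)
  with V have h_integrable: "integrable mu h"
    by simp
  have "(\<integral>\<theta>. Vt Lb gIn (F \<theta>) (R \<theta>) (p \<theta>) \<partial>mu) = (\<integral>\<theta>. - h \<theta> \<partial>mu)"
    by (rule Bochner_Integration.integral_cong) (simp_all add: Vt space_mu)
  with IR_V have "integral\<^sup>L mu h \<le> 0"
    by simp
  moreover have h_nonneg: "0 \<le> h \<theta>" if "\<theta> \<in> space mu" for \<theta>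
  proof -
    have "(LINT l:{0..Lb}|lborel. 0) \<le> h \<theta>"
      unfolding h_def using that loss_integrand[of \<theta>]
      by (intro set_integral_mono[OF set_integrable_Icc_const]) (auto simp: space_mu)
    then show ?thesis
      by simp
  qed
  moreover have "0 \<le> integral\<^sup>L mu h"
    using h_nonneg by (rule Bochner_Integration.integral_nonneg)
  ultimately have "AE \<theta> in mu. h \<theta> = 0"
    using integral_nonneg_eq_0_iff_AE[OF h_integrable] AE_I2[OF h_nonneg] by simp
  then show ?thesis
  proof (rule AE_mp[OF _ AE_I2], intro impI)
    fix \<theta> assume "\<theta> \<in> space mu" "h \<theta> = 0"
    then have "AE l in lebesgue_on {0..Lb}. 1 - gIn (F \<theta> l) = 0"
      using loss_integrand unfolding h_def space_mu
      by (intro AE_lebesgue_on_eq_0_if_set_integral_eq_0) auto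
    then show "AE l in lebesgue_on {0..Lb}. gIn (F \<theta> l) = 1"
      by (auto elim: eventually_mono)
  qed
qed

end

theorem lemma2:
  fixes P :: "'s measure" and L :: "real \<Rightarrow> 's \<Rightarrow> real"
    and F :: "real \<Rightarrow> real \<Rightarrow> real"
    and \<theta>l \<theta>u Lb \<alpha> :: real
    and q :: "real \<Rightarrow> real" and mu eta :: "real measure"
    and g :: "real \<Rightarrow> real \<Rightarrow> real" and gIn :: "real \<Rightarrow> real"
    and Rs :: "real \<Rightarrow> real \<Rightarrow> real" and ps :: "real \<Rightarrow> real"
  assumes P: "prob_space P"
    and L_meas: "\<And>\<theta>. \<theta> \<in> {\<theta>l..\<theta>u} \<Longrightarrow> L \<theta> \<in> borel_measurable P"
    and L_range: "\<And>\<theta> s. \<theta> \<in> {\<theta>l..\<theta>u} \<Longrightarrow> s \<in> space P \<Longrightarrow> L \<theta> s \<in> {0..Lb}"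
    and F_def: "\<And>\<theta> l. \<theta> \<in> {\<theta>l..\<theta>u} \<Longrightarrow> F \<theta> l = measure P {s \<in> space P. L \<theta> s \<le> l}"
    and F_cont: "\<And>\<theta>. \<theta> \<in> {\<theta>l..\<theta>u} \<Longrightarrow> continuous_on UNIV (F \<theta>)"
    and q_meas: "q \<in> borel_measurable borel"
    and q_nonneg: "\<And>x. q x \<ge> 0"
    and mu_def: "mu = density (restrict_space lborel {\<theta>l..\<theta>u}) (\<lambda>x. ennreal (q x))"
    and mu_prob: "prob_space mu"
    and eta_prob: "prob_space eta"
    and eta_sets: "sets eta = sets mu"
    and eta_equiv: "null_sets eta = null_sets mu"
    and alpha: "0 < \<alpha>" "\<alpha> \<le> 1"
    and g_dist: "\<And>\<theta>. \<theta> \<in> {\<theta>l..\<theta>u} \<Longrightarrow> distortion (g \<theta>)"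
    and gIn_dist: "distortion gIn"
    and A1: "\<And>\<theta> t. \<theta> \<in> {\<theta>l..\<theta>u} \<Longrightarrow> t \<in> {0..1} \<Longrightarrow> gIn t \<ge> g \<theta> t"
    and A2_diff: "\<And>\<theta> l. \<theta> \<in> {\<theta>l..\<theta>u} \<Longrightarrow> (\<lambda>s. F s l) differentiable (at \<theta> within {\<theta>l..\<theta>u})"
    and A2_lip: "\<exists>K. \<forall>l. \<forall>\<theta>\<in>{\<theta>l..\<theta>u}. \<forall>\<theta>'\<in>{\<theta>l..\<theta>u}. \<bar>F \<theta> l - F \<theta>' l\<bar> \<le> K * \<bar>\<theta> - \<theta>'\<bar>"
    and A2_sign: "\<And>\<theta> l. \<theta> \<in> {\<theta>l..\<theta>u} \<Longrightarrow> dwithin (\<lambda>s. F s l) \<theta>l \<theta>u \<theta> \<le> 0"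
    and A3_diff: "\<And>\<theta> t. \<theta> \<in> {\<theta>l..\<theta>u} \<Longrightarrow> t \<in> {0..1} \<Longrightarrow> g \<theta> differentiable (at t within {0..1})"
    and A3_bound: "\<exists>\<delta>. \<forall>\<theta>\<in>{\<theta>l..\<theta>u}. \<forall>t\<in>{0..1}. dwithin (g \<theta>) 0 1 t \<le> \<delta>"
    and A3_diff_theta: "\<And>\<theta> t. \<theta> \<in> {\<theta>l..\<theta>u} \<Longrightarrow> t \<in> {0..1} \<Longrightarrow> (\<lambda>s. g s t) differentiable (at \<theta> within {\<theta>l..\<theta>u})"
    and A3_lip: "\<exists>K. \<forall>t\<in>{0..1}. \<forall>\<theta>\<in>{\<theta>l..\<theta>u}. \<forall>\<theta>'\<in>{\<theta>l..\<theta>u}. \<bar>g \<theta> t - g \<theta>' t\<bar> \<le> K * \<bar>\<theta> - \<theta>'\<bar>"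
    and A3_sign: "\<And>\<theta> t. \<theta> \<in> {\<theta>l..\<theta>u} \<Longrightarrow> t \<in> {0<..<1} \<Longrightarrow> dwithin (\<lambda>s. g s t) \<theta>l \<theta>u \<theta> \<le> 0"
    and eff: "incentive_efficient mu Lb g gIn F Rs ps"
    and opt: "optimal_W \<alpha> eta mu Lb g gIn F Rs ps"
    and premium: "\<And>\<theta>. \<theta> \<in> {\<theta>l..\<theta>u} \<Longrightarrow> ps \<theta> =
        (LINT l:{0..Lb}|lborel. 1 - g \<theta>l (F \<theta>l l))
      - (LINT s:{\<theta>l..\<theta>}|lborel. (LINT l:{0..Lb}|lborel.
            (dwithin (\<lambda>r. g r (F s l)) \<theta>l \<theta>u s + dwithin (g s) 0 1 (F s l) * dwithin (\<lambda>r. F r l) \<theta>l \<theta>u s)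
            * dwithin (Rs s) 0 Lb l))
      - (LINT l:{0..Lb}|lborel. (1 - g \<theta> (F \<theta> l)) * dwithin (Rs \<theta>) 0 Lb l)"
  shows
    "((\<forall>\<theta>\<in>{\<theta>l..\<theta>u}. \<forall>l\<in>{0..Lb}. dwithin (Rs \<theta>) 0 Lb l = 0) \<longrightarrow>
        (\<integral>\<theta>. (LINT l:{0..Lb}|lborel. gIn (F \<theta> l)) \<partial>mu) \<ge> (LINT l:{0..Lb}|lborel. g \<theta>l (F \<theta>l l)))
   \<and> ((\<forall>\<theta>\<in>{\<theta>l..\<theta>u}. \<forall>l\<in>{0..Lb}. dwithin (Rs \<theta>) 0 Lb l = 1) \<longrightarrow>
        (\<forall>\<theta>\<in>{\<theta>l..\<theta>u}. Vt Lb gIn (F \<theta>) (Rs \<theta>) (ps \<theta>) = 0))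
   \<and> ((\<forall>\<theta>\<in>{\<theta>l..\<theta>u}. \<forall>l\<in>{0..Lb}. dwithin (Rs \<theta>) 0 Lb l \<in> {0<..<1}) \<longrightarrow>
        (\<integral>\<theta>. (LINT l:{0..Lb}|lborel. gIn (F \<theta> l)) \<partial>mu) \<ge>
          (LINT l:{0..Lb}|lborel. g \<theta>l (F \<theta>l l))
          + (\<integral>\<theta>. Ut Lb (g \<theta>) (F \<theta>) (Rs \<theta>) (ps \<theta>) \<partial>mu)
          - Ut Lb (g \<theta>l) (F \<theta>l) (Rs \<theta>l) (ps \<theta>l)
          + (\<integral>\<theta>. (LINT l:{0..Lb}|lborel. (gIn (F \<theta> l) - g \<theta> (F \<theta> l)) * dwithin (Rs \<theta>) 0 Lb l) \<partial>mu))
   \<and> ((\<forall>\<theta>\<in>{\<theta>l..\<theta>u}. ps \<theta> = 0 \<and> (\<forall>l\<in>{0..Lb}. Rs \<theta> l = 0)) \<longrightarrow>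
        (AE \<theta> in mu. AE l in lebesgue_on {0..Lb}. gIn (F \<theta> l) = 1))"
proof -
  have F_eq: "F \<theta> = (\<lambda>l. measure P {s \<in> space P. L \<theta> s \<le> l})" if "\<theta> \<in> {\<theta>l..\<theta>u}" for \<theta>
    using F_def[OF that] by (rule ext)
  interpret insurance_market mu Lb \<theta>l \<theta>u g gIn F
  proof (intro insurance_market.intro insurance_market_axioms.intro)
    show "space mu = {\<theta>l..\<theta>u}" "sets mu = sets (restrict_space borel {\<theta>l..\<theta>u})"
      by (simp_all add: mu_def sets_restrict_space)
    show "mono (F \<theta>)" "F \<theta> l \<in> {0..1}" if "\<theta> \<in> {\<theta>l..\<theta>u}" for \<theta> l
      unfolding F_eq[OF that] using distribution_function_mono_range[OF P L_meas[OF that]]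
      by auto
    show "F \<theta>' l \<le> F \<theta> l"
      if "\<theta> \<in> {\<theta>l..\<theta>u}" "\<theta>' \<in> {\<theta>l..\<theta>u}" "\<theta> \<le> \<theta>'" for \<theta> \<theta>' l
      using that
      by (intro dwithin_nonpos_imp_decreasing[of \<theta>l \<theta>u "\<lambda>s. F s l"] A2_diff A2_sign) auto
  qed (use mu_prob g_dist gIn_dist in auto)
  have feasible: "feasible mu Lb g gIn F Rs ps"
    using eff by (simp add: incentive_efficient_def)
  have envelope: "\<And>\<theta>. \<theta> \<in> {\<theta>l..\<theta>u} \<Longrightarrow> ps \<theta> = envelope_premium Lb \<theta>l \<theta>u g F Rs \<theta>"
    using premium by (simp add: envelope_premium_def)
  show ?thesis
    using expected_gIn_ge_full_coverage[OF feasible envelope] Vt_eq_0_no_coverage[OF feasible]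
      welfare_bound_envelope_premium[OF feasible envelope]
      AE_gIn_eq_1_free_full_coverage[OF feasible]
    by blast
qed

end
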